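(* Let $\theta^*\in\mathbb{R}^n$, let $\phi_1,\dots,\phi_N\in\mathbb{R}^n$ with $[\phi_1,\dots,\phi_N]$ of rank $n$, and $y_k:=\phi_k^T\theta^*$. For any $\beta>0$, $\gamma>0$ and $\mu\ge0$, with $$B(\theta,\mu):=\sum_{k=1}^N\frac{\phi_k}{1+\mu\phi_k^T\phi_k}\big(\phi_k^T\theta-y_k\big),$$ the point $(\theta^*,\theta^* )$ is uniformly globally asymptotically stable for the system in $(\theta,\vartheta)\in\mathbb{R}^{2n}$ $$\dot\theta=-\beta(\theta-\vartheta),\qquad\dot\vartheta=-\gamma B(\theta,\mu).$$
   Context: In the paper $\phi_k=\phi(t_k)$, $y_k=y^*(t_k)$ are recorded data samples. UGAS: uniformly globally stable (there is class-$\mathcal{K}_\infty$ $\kappa$ with $|x(t)-x^*|\le\kappa(|x_\circ-x^*|)$ for $t\ge t_\circ$) and uniformly globally attractive (for each $r,\sigma>0$ there is $T'>0$ with $|x_\circ-x^*|\le r\Rightarrow |x(t)-x^*|\le\sigma$ for $t\ge t_\circ+T'$). *)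

theory Defs
  imports "HOL-Analysis.Analysis"
begin

definition class_K_inf :: "(real \<Rightarrow> real) \<Rightarrow> bool" where
  "class_K_inf \<kappa> \<longleftrightarrow> continuous_on {0..} \<kappa> \<and> strict_mono_on {0..} \<kappa> \<and> \<kappa> 0 = 0
      \<and> filterlim \<kappa> at_top at_top"

definition is_solution ::
  "(real \<Rightarrow> 'a::real_normed_vector \<Rightarrow> 'a) \<Rightarrow> real \<Rightarrow> 'a \<Rightarrow> (real \<Rightarrow> 'a) \<Rightarrow> bool" where
  "is_solution f t0 x0 x \<longleftrightarrow> x t0 = x0 \<and>
     (\<forall>t\<ge>t0. (x has_vector_derivative f t (x t)) (at t within {t0..}))"

definition UGAS :: "(real \<Rightarrow> 'a::real_normed_vector \<Rightarrow> 'a) \<Rightarrow> 'a \<Rightarrow> bool" where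
  "UGAS f xs \<longleftrightarrow>
     (\<exists>\<kappa>. class_K_inf \<kappa> \<and>
        (\<forall>t0 x0 x. is_solution f t0 x0 x \<longrightarrow>
           (\<forall>t\<ge>t0. norm (x t - xs) \<le> \<kappa> (norm (x0 - xs))))) \<and>
     (\<forall>r>0. \<forall>\<sigma>>0. \<exists>T'>0. \<forall>t0 x0 x. is_solution f t0 x0 x \<longrightarrow> norm (x0 - xs) \<le> r \<longrightarrow>
           (\<forall>t\<ge>t0 + T'. norm (x t - xs) \<le> \<sigma>))"

definition Bfun :: "(nat \<Rightarrow> real^'n) \<Rightarrow> nat \<Rightarrow> real^'n \<Rightarrow> real^'n \<Rightarrow> real \<Rightarrow> real^'n" where
  "Bfun \<phi> N \<theta>s \<theta> \<mu> =
     (\<Sum>k=1..N. ((\<phi> k \<bullet> \<theta> - \<phi> k \<bullet> \<theta>s) / (1 + \<mu> * (\<phi> k \<bullet> \<phi> k))) *\<^sub>R \<phi> k)"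

end

theory Submission
  imports Defs
begin

text \<open>In the error coordinates \<open>e = \<theta> - \<theta>s\<close>, \<open>w = \<theta>v - \<theta>s\<close> the system is linear,
  \<open>e' = -\<beta> (e - w)\<close>, \<open>w' = -\<gamma> G e\<close>, where \<open>G = \<Sum>\<^sub>k \<phi>\<^sub>k \<phi>\<^sub>k\<^sup>T / (1 + \<mu> |\<phi>\<^sub>k|\<^sup>2)\<close> is
  symmetric and, by the rank condition, positive definite, say \<open>G \<ge> m I\<close>. The quadratic form
  \<open>V = \<gamma> e\<^sup>T G e + \<beta> |w|\<^sup>2 - c e\<^sup>T w\<close> with \<open>c = min (\<gamma> m) \<beta>\<close> is comparable to
  \<open>|e|\<^sup>2 + |w|\<^sup>2\<close> and satisfies \<open>V' \<le> -\<alpha> V\<close>, so every solution decays exponentially with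
  constants independent of the initial time and state; this is UGAS.\<close>

lemma exp_decay_of_deriv_le:
  fixes V V' :: "real \<Rightarrow> real"
  assumes V: "\<And>s. t0 \<le> s \<Longrightarrow> (V has_real_derivative V' s) (at s within {t0..})"
    and V'_le: "\<And>s. t0 \<le> s \<Longrightarrow> V' s \<le> - \<alpha> * V s"
    and t: "t0 \<le> t"
  shows "V t \<le> V t0 * exp (- \<alpha> * (t - t0))"
proof -
  define g where "g s = V s * exp (\<alpha> * (s - t0))" for s
  define g' where "g' s = (V' s + \<alpha> * V s) * exp (\<alpha> * (s - t0))" for s
  have g: "(g has_real_derivative g' s) (at s within {t0..})" if "t0 \<le> s" for s
    unfolding g_def g'_def
    by (rule derivative_eq_intros V that refl | simp add: algebra_simps)+
  have "continuous_on {t0..t} g"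
    by (rule continuous_on_subset[OF DERIV_continuous_on[OF g]]) auto
  then have "g t \<le> g t0"
  proof (rule DERIV_nonpos_imp_decreasing_open[OF t, rotated])
    fix s assume s: "t0 < s" "s < t"
    have "at s within {t0..} = at s"
      by (rule at_within_interior) (use s in auto)
    then have "DERIV g s :> g' s"
      using g[of s] s by simp
    moreover have "g' s \<le> 0"
      using V'_le[of s] s by (simp add: g'_def mult_nonpos_nonneg)
    ultimately show "\<exists>y. DERIV g s :> y \<and> y \<le> 0" by blast
  qed
  then have "V t * exp (\<alpha> * (t - t0)) * exp (- \<alpha> * (t - t0)) \<le> V t0 * exp (- \<alpha> * (t - t0))"
    by (intro mult_right_mono) (auto simp: g_def)
  then show ?thesis
    by (simp add: mult.assoc flip: exp_add)
qed

lemma class_K_inf_mult: "0 < C \<Longrightarrow> class_K_inf (\<lambda>r. C * r)"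
  unfolding class_K_inf_def strict_mono_on_def
  by (auto intro!: continuous_intros filterlim_tendsto_pos_mult_at_top filterlim_ident)

lemma UGAS_of_exponential_bound:
  fixes f :: "real \<Rightarrow> 'a::real_normed_vector \<Rightarrow> 'a"
  assumes C: "0 < C" and \<alpha>: "0 < \<alpha>"
    and bound: "\<And>t0 x0 x t. is_solution f t0 x0 x \<Longrightarrow> t0 \<le> t \<Longrightarrow>
        norm (x t - xs) \<le> C * norm (x0 - xs) * exp (- \<alpha> * (t - t0))"
  shows "UGAS f xs"
  unfolding UGAS_def
proof (intro conjI allI impI)
  have "norm (x t - xs) \<le> C * norm (x0 - xs)" if "is_solution f t0 x0 x" "t0 \<le> t" for t0 x0 x t
  proof -
    have "norm (x t - xs) \<le> C * norm (x0 - xs) * exp (- \<alpha> * (t - t0))"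
      using bound that .
    also have "\<dots> \<le> C * norm (x0 - xs) * 1"
      using C \<alpha> that(2) by (intro mult_left_mono) auto
    finally show ?thesis by simp
  qed
  then show "\<exists>\<kappa>. class_K_inf \<kappa> \<and> (\<forall>t0 x0 x. is_solution f t0 x0 x \<longrightarrow>
      (\<forall>t\<ge>t0. norm (x t - xs) \<le> \<kappa> (norm (x0 - xs))))"
    using class_K_inf_mult[OF C] by blast
next
  fix r \<sigma> :: real assume r: "0 < r" and \<sigma>: "0 < \<sigma>"
  define T where "T = max 1 (ln (C * r / \<sigma>) / \<alpha>)"
  have "norm (x t - xs) \<le> \<sigma>"
    if x: "is_solution f t0 x0 x" and x0: "norm (x0 - xs) \<le> r" and t: "t0 + T \<le> t" for t0 x0 x t
  proof -
    have "ln (C * r / \<sigma>) \<le> \<alpha> * T"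
      using \<alpha> by (simp add: T_def field_simps max_def)
    also have "\<dots> \<le> \<alpha> * (t - t0)"
      using \<alpha> t by simp
    finally have "exp (- \<alpha> * (t - t0)) \<le> exp (- ln (C * r / \<sigma>))"
      by simp
    also have "\<dots> = \<sigma> / (C * r)"
      using C r \<sigma> by (simp add: exp_minus)
    finally have e: "exp (- \<alpha> * (t - t0)) \<le> \<sigma> / (C * r)" .
    have "norm (x t - xs) \<le> C * norm (x0 - xs) * exp (- \<alpha> * (t - t0))"
      by (rule bound[OF x]) (use t T_def in auto)
    also have "\<dots> \<le> C * r * (\<sigma> / (C * r))"
      using C r x0 e by (intro mult_mono) auto
    finally show ?thesis
      using C r by simp
  qed
  moreover have "0 < T" by (simp add: T_def)
  ultimately show "\<exists>T'>0. \<forall>t0 x0 x. is_solution f t0 x0 x \<longrightarrow> norm (x0 - xs) \<le> r \<longrightarrow>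
      (\<forall>t\<ge>t0 + T'. norm (x t - xs) \<le> \<sigma>)"
    by blast
qed

lemma has_real_derivative_inner:
  assumes "(f has_vector_derivative f') (at t within S)" "(g has_vector_derivative g') (at t within S)"
  shows "((\<lambda>s. f s \<bullet> g s) has_real_derivative f' \<bullet> g t + f t \<bullet> g') (at t within S)"
proof -
  have "((\<lambda>s. f s \<bullet> g s) has_derivative (\<lambda>h. f t \<bullet> (h *\<^sub>R g') + (h *\<^sub>R f') \<bullet> g t)) (at t within S)"
    using assms unfolding has_vector_derivative_def by (rule has_derivative_inner)
  moreover have "(\<lambda>h. f t \<bullet> (h *\<^sub>R g') + (h *\<^sub>R f') \<bullet> g t) = (*) (f' \<bullet> g t + f t \<bullet> g')"
    by (auto simp: algebra_simps)
  ultimately show ?thesis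
    unfolding has_field_derivative_def by simp
qed

lemma abs_inner_le_half_sum: "2 * \<bar>x \<bullet> y\<bar> \<le> x \<bullet> x + y \<bullet> (y::'a::real_inner)"
proof -
  have "0 \<le> (x - y) \<bullet> (x - y)" "0 \<le> (x + y) \<bullet> (x + y)"
    by simp_all
  then show ?thesis
    by (simp add: inner_diff_left inner_diff_right inner_add_left inner_add_right inner_commute abs_le_iff)
qed

definition error_lyapunov :: "('a::real_inner \<Rightarrow> 'a) \<Rightarrow> real \<Rightarrow> real \<Rightarrow> real \<Rightarrow> 'a \<Rightarrow> 'a \<Rightarrow> real" where
  "error_lyapunov G \<beta> \<gamma> c e w = \<gamma> * (e \<bullet> G e) + \<beta> * (w \<bullet> w) - c * (e \<bullet> w)"

definition error_lyapunov_rate :: "('a::real_inner \<Rightarrow> 'a) \<Rightarrow> real \<Rightarrow> real \<Rightarrow> real \<Rightarrow> 'a \<Rightarrow> 'a \<Rightarrow> real" where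
  "error_lyapunov_rate G \<beta> \<gamma> c e w = - (2 * \<beta> - c) * \<gamma> * (e \<bullet> G e) + c * \<beta> * (e \<bullet> w) - c * \<beta> * (w \<bullet> w)"

lemma has_real_derivative_error_lyapunov:
  fixes G :: "'a::real_inner \<Rightarrow> 'a"
  assumes G: "bounded_linear G" and G_sym: "\<And>u v. u \<bullet> G v = G u \<bullet> v"
    and E: "(E has_vector_derivative - \<beta> *\<^sub>R (E s - W s)) (at s within S)"
    and W: "(W has_vector_derivative - \<gamma> *\<^sub>R G (E s)) (at s within S)"
  shows "((\<lambda>s. error_lyapunov G \<beta> \<gamma> c (E s) (W s)) has_real_derivative
      error_lyapunov_rate G \<beta> \<gamma> c (E s) (W s)) (at s within S)"
proof -
  interpret G: bounded_linear G by (rule G)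
  let ?E' = "- \<beta> *\<^sub>R (E s - W s)" and ?W' = "- \<gamma> *\<^sub>R G (E s)"
  have "((\<lambda>s. error_lyapunov G \<beta> \<gamma> c (E s) (W s)) has_real_derivative
      \<gamma> * (?E' \<bullet> G (E s) + E s \<bullet> G ?E') + \<beta> * (?W' \<bullet> W s + W s \<bullet> ?W')
      - c * (?E' \<bullet> W s + E s \<bullet> ?W')) (at s within S)"
    unfolding error_lyapunov_def
    by (intro DERIV_diff DERIV_add DERIV_cmult has_real_derivative_inner E W G.has_vector_derivative)
  moreover have "E s \<bullet> G ?E' = ?E' \<bullet> G (E s)"
    by (simp only: G_sym inner_commute)
  moreover have "?E' \<bullet> G (E s) = - \<beta> * (E s \<bullet> G (E s)) + \<beta> * (W s \<bullet> G (E s))"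
    "?W' \<bullet> W s = - \<gamma> * (W s \<bullet> G (E s))" "W s \<bullet> ?W' = - \<gamma> * (W s \<bullet> G (E s))"
    "?E' \<bullet> W s = - \<beta> * (E s \<bullet> W s) + \<beta> * (W s \<bullet> W s)" "E s \<bullet> ?W' = - \<gamma> * (E s \<bullet> G (E s))"
    by (simp_all add: inner_diff_left right_diff_distrib inner_commute[of "G (E s)"])
  ultimately show ?thesis
    unfolding error_lyapunov_rate_def by (simp only:) (simp add: algebra_simps)
qed

lemma error_lyapunov_lower:
  assumes c: "0 < c" "c \<le> \<beta>" and e: "c * (e \<bullet> e) \<le> \<gamma> * (e \<bullet> G e)"
  shows "c / 2 * (e \<bullet> e + w \<bullet> w) \<le> error_lyapunov G \<beta> \<gamma> c e w"
proof -
  have "c * (w \<bullet> w) \<le> \<beta> * (w \<bullet> w)"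
    using c by (intro mult_right_mono) auto
  moreover have "c * (e \<bullet> w) \<le> c / 2 * (e \<bullet> e + w \<bullet> w)"
    using abs_inner_le_half_sum[of e w] c by (simp add: abs_le_iff)
  ultimately show ?thesis
    using e by (simp add: error_lyapunov_def algebra_simps)
qed

lemma error_lyapunov_upper:
  assumes "0 \<le> c" "0 \<le> \<beta>" "0 \<le> \<gamma> * L" and e: "\<gamma> * (e \<bullet> G e) \<le> \<gamma> * L * (e \<bullet> e)"
  shows "error_lyapunov G \<beta> \<gamma> c e w \<le> (\<gamma> * L + \<beta> + c) * (e \<bullet> e + w \<bullet> w)"
proof -
  have "\<gamma> * L * (e \<bullet> e) \<le> \<gamma> * L * (e \<bullet> e + w \<bullet> w)"
    using assms by (intro mult_left_mono) simp_all
  moreover have "\<beta> * (w \<bullet> w) \<le> \<beta> * (e \<bullet> e + w \<bullet> w)"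
    using assms by (intro mult_left_mono) simp_all
  moreover have "- (e \<bullet> w) \<le> e \<bullet> e + w \<bullet> w"
    using abs_inner_le_half_sum[of e w] by linarith
  then have "- c * (e \<bullet> w) \<le> c * (e \<bullet> e + w \<bullet> w)"
    using assms by (metis minus_mult_commute mult_left_mono)
  ultimately show ?thesis
    using e by (simp add: error_lyapunov_def algebra_simps)
qed

lemma error_lyapunov_rate_le:
  assumes c: "0 < c" "c \<le> \<beta>" and e: "c * (e \<bullet> e) \<le> \<gamma> * (e \<bullet> G e)"
  shows "error_lyapunov_rate G \<beta> \<gamma> c e w \<le> - (c * \<beta> / 2) * (e \<bullet> e + w \<bullet> w)"
proof -
  have "\<beta> * (c * (e \<bullet> e)) \<le> (2 * \<beta> - c) * (\<gamma> * (e \<bullet> G e))"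
    by (rule mult_mono[OF _ e]) (use c in auto)
  moreover have "c * \<beta> * (e \<bullet> w) \<le> c * \<beta> * ((e \<bullet> e + w \<bullet> w) / 2)"
    using abs_inner_le_half_sum[of e w] c by (intro mult_left_mono) (auto simp: abs_le_iff)
  ultimately show ?thesis
    by (simp add: error_lyapunov_rate_def field_simps)
qed

text \<open>The cross term \<open>- c * (e \<bullet> w)\<close> is what makes the Lyapunov function strict: without it
  the rate only controls \<open>e\<close>, not \<open>w\<close>.\<close>

lemma error_dynamics_exponential_bound:
  fixes G :: "'a::real_inner \<Rightarrow> 'a"
  assumes G: "bounded_linear G" and G_sym: "\<And>u v. u \<bullet> G v = G u \<bullet> v"
    and m: "0 < m" "\<And>e. m * (e \<bullet> e) \<le> e \<bullet> G e"
    and L: "0 \<le> L" "\<And>e. e \<bullet> G e \<le> L * (e \<bullet> e)"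
    and \<beta>: "0 < \<beta>" and \<gamma>: "0 < \<gamma>"
  obtains K \<alpha> where "0 < K" "0 < \<alpha>"
    "\<And>t0 E W t.
      (\<And>s. t0 \<le> s \<Longrightarrow> (E has_vector_derivative - \<beta> *\<^sub>R (E s - W s)) (at s within {t0..})) \<Longrightarrow>
      (\<And>s. t0 \<le> s \<Longrightarrow> (W has_vector_derivative - \<gamma> *\<^sub>R G (E s)) (at s within {t0..})) \<Longrightarrow>
      t0 \<le> t \<Longrightarrow>
      E t \<bullet> E t + W t \<bullet> W t \<le> K * (E t0 \<bullet> E t0 + W t0 \<bullet> W t0) * exp (- \<alpha> * (t - t0))"
proof
  define c where "c = min (\<gamma> * m) \<beta>"
  have c: "0 < c" "c \<le> \<beta>"
    using m \<beta> \<gamma> by (auto simp: c_def)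
  have coercive: "c * (e \<bullet> e) \<le> \<gamma> * (e \<bullet> G e)" for e
  proof -
    have "c * (e \<bullet> e) \<le> \<gamma> * m * (e \<bullet> e)"
      by (intro mult_right_mono) (simp_all add: c_def)
    also have "\<dots> \<le> \<gamma> * (e \<bullet> G e)"
      using m(2) \<gamma> by (simp add: mult.assoc)
    finally show ?thesis .
  qed
  define M where "M = \<gamma> * L + \<beta> + c"
  have M: "0 < M"
    using L \<gamma> \<beta> c by (simp add: M_def add_nonneg_pos)
  have upper: "error_lyapunov G \<beta> \<gamma> c e w \<le> M * (e \<bullet> e + w \<bullet> w)" for e w
    unfolding M_def using c \<beta> \<gamma> L by (intro error_lyapunov_upper) (simp_all add: mult.assoc)
  define \<alpha> where "\<alpha> = c * \<beta> / (2 * M)"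
  show "0 < 2 * M / c" "0 < \<alpha>"
    using M c \<beta> by (simp_all add: \<alpha>_def)
  fix t0 E W t
  assume E: "\<And>s. t0 \<le> s \<Longrightarrow> (E has_vector_derivative - \<beta> *\<^sub>R (E s - W s)) (at s within {t0..})"
    and W: "\<And>s. t0 \<le> s \<Longrightarrow> (W has_vector_derivative - \<gamma> *\<^sub>R G (E s)) (at s within {t0..})"
    and t: "t0 \<le> t"
  define S where "S s = E s \<bullet> E s + W s \<bullet> W s" for s
  define V where "V s = error_lyapunov G \<beta> \<gamma> c (E s) (W s)" for s
  have "error_lyapunov_rate G \<beta> \<gamma> c (E s) (W s) \<le> - \<alpha> * V s" for s
  proof -
    have "error_lyapunov_rate G \<beta> \<gamma> c (E s) (W s) \<le> - (c * \<beta> / 2) * S s"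
      unfolding S_def using c coercive by (rule error_lyapunov_rate_le)
    also have "\<dots> \<le> - (c * \<beta> / 2) * (V s / M)"
      using upper M c \<beta> by (intro mult_left_mono_neg) (auto simp: V_def S_def divide_le_eq mult.commute)
    finally show ?thesis
      by (simp add: \<alpha>_def)
  qed
  then have decay: "V t \<le> V t0 * exp (- \<alpha> * (t - t0))"
    unfolding V_def
    by (intro exp_decay_of_deriv_le[OF has_real_derivative_error_lyapunov[OF G G_sym E W] _ t])
  have "c / 2 * S t \<le> V t"
    unfolding S_def V_def using c coercive by (rule error_lyapunov_lower)
  also have "\<dots> \<le> V t0 * exp (- \<alpha> * (t - t0))"
    by (rule decay)
  also have "\<dots> \<le> M * S t0 * exp (- \<alpha> * (t - t0))"
    unfolding S_def V_def using upper by (intro mult_right_mono) auto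
  finally show "S t \<le> 2 * M / c * S t0 * exp (- \<alpha> * (t - t0))"
    using c by (simp add: field_simps)
qed

lemma UGAS_error_dynamics:
  fixes G :: "'a::real_inner \<Rightarrow> 'a" and \<theta>s :: 'a
  assumes G: "bounded_linear G" and G_sym: "\<And>u v. u \<bullet> G v = G u \<bullet> v"
    and m: "0 < m" "\<And>e. m * (e \<bullet> e) \<le> e \<bullet> G e"
    and L: "0 \<le> L" "\<And>e. e \<bullet> G e \<le> L * (e \<bullet> e)"
    and \<beta>: "0 < \<beta>" and \<gamma>: "0 < \<gamma>"
  shows "UGAS (\<lambda>t (\<theta>, \<theta>v). (- \<beta> *\<^sub>R (\<theta> - \<theta>v), - \<gamma> *\<^sub>R G (\<theta> - \<theta>s))) (\<theta>s, \<theta>s)"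
    (is "UGAS ?f _")
proof -
  obtain K \<alpha> where K: "0 < K" and \<alpha>: "0 < \<alpha>" and bound:
    "\<And>t0 E W t.
      (\<And>s. t0 \<le> s \<Longrightarrow> (E has_vector_derivative - \<beta> *\<^sub>R (E s - W s)) (at s within {t0..})) \<Longrightarrow>
      (\<And>s. t0 \<le> s \<Longrightarrow> (W has_vector_derivative - \<gamma> *\<^sub>R G (E s)) (at s within {t0..})) \<Longrightarrow>
      t0 \<le> t \<Longrightarrow>
      E t \<bullet> E t + W t \<bullet> W t \<le> K * (E t0 \<bullet> E t0 + W t0 \<bullet> W t0) * exp (- \<alpha> * (t - t0))"
    using error_dynamics_exponential_bound[OF G G_sym m L \<beta> \<gamma>] by blast
  have "norm (x t - (\<theta>s, \<theta>s)) \<le> sqrt K * norm (x0 - (\<theta>s, \<theta>s)) * exp (- (\<alpha> / 2) * (t - t0))"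
    if x: "is_solution ?f t0 x0 x" and t: "t0 \<le> t" for t0 x0 x t
  proof -
    define E where "E s = fst (x s) - \<theta>s" for s
    define W where "W s = snd (x s) - \<theta>s" for s
    have x_eq: "x s - (\<theta>s, \<theta>s) = (E s, W s)" for s
      by (simp add: E_def W_def prod_eq_iff)
    have "(x has_vector_derivative (- \<beta> *\<^sub>R (E s - W s), - \<gamma> *\<^sub>R G (E s))) (at s within {t0..})"
      if "t0 \<le> s" for s
      using x that by (simp add: is_solution_def split_beta E_def W_def)
    then have "((\<lambda>s. x s - (\<theta>s, \<theta>s)) has_vector_derivative (- \<beta> *\<^sub>R (E s - W s), - \<gamma> *\<^sub>R G (E s)))
        (at s within {t0..})" if "t0 \<le> s" for s
      using that by (auto intro!: derivative_eq_intros)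
    then have E: "(E has_vector_derivative - \<beta> *\<^sub>R (E s - W s)) (at s within {t0..})"
      and W: "(W has_vector_derivative - \<gamma> *\<^sub>R G (E s)) (at s within {t0..})" if "t0 \<le> s" for s
      using bounded_linear.has_vector_derivative[OF bounded_linear_fst]
        bounded_linear.has_vector_derivative[OF bounded_linear_snd] that
      unfolding x_eq by (fastforce simp: comp_def)+
    have norm_sq: "(norm (x s - (\<theta>s, \<theta>s)))\<^sup>2 = E s \<bullet> E s + W s \<bullet> W s" for s
      by (simp add: x_eq norm_Pair power2_norm_eq_inner)
    have "(norm (x t - (\<theta>s, \<theta>s)))\<^sup>2 \<le> K * (norm (x0 - (\<theta>s, \<theta>s)))\<^sup>2 * exp (- \<alpha> * (t - t0))"
      using bound[OF E W t] x unfolding norm_sq is_solution_def by (metis norm_sq)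
    also have "\<dots> = (sqrt K * norm (x0 - (\<theta>s, \<theta>s)) * exp (- (\<alpha> / 2) * (t - t0)))\<^sup>2"
    proof -
      have "exp (- \<alpha> * (t - t0)) = (exp (- (\<alpha> / 2) * (t - t0)))\<^sup>2"
        by (simp add: power2_eq_square flip: exp_add)
      then show ?thesis
        using K by (simp add: power_mult_distrib)
    qed
    finally show ?thesis
      by (rule power2_le_imp_le) (use K in simp)
  qed
  then show ?thesis
    using K \<alpha> by (intro UGAS_of_exponential_bound[of "sqrt K" "\<alpha> / 2"]) auto
qed

lemma positive_definite_imp_coercive:
  fixes G :: "'a::euclidean_space \<Rightarrow> 'a"
  assumes G: "bounded_linear G" and pos: "\<And>e. e \<noteq> 0 \<Longrightarrow> 0 < e \<bullet> G e"
  obtains m where "0 < m" "\<And>e. m * (e \<bullet> e) \<le> e \<bullet> G e"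
proof -
  interpret G: bounded_linear G by (rule G)
  obtain b :: 'a where "b \<in> Basis"
    using nonempty_Basis by blast
  then have "sphere (0::'a) 1 \<noteq> {}"
    by (auto intro!: exI[of _ b])
  moreover have "continuous_on (sphere 0 1) (\<lambda>e. e \<bullet> G e)"
    by (intro continuous_intros G.continuous_on continuous_on_id)
  ultimately obtain u where u: "u \<in> sphere 0 1" and u_min: "\<And>w. w \<in> sphere 0 1 \<Longrightarrow> u \<bullet> G u \<le> w \<bullet> G w"
    using continuous_attains_inf[OF compact_sphere] by blast
  show ?thesis
  proof
    show "0 < u \<bullet> G u"
      using u by (intro pos) auto
    fix e :: 'a
    show "u \<bullet> G u * (e \<bullet> e) \<le> e \<bullet> G e"
    proof (cases "e = 0")
      case False
      define w where "w = (1 / norm e) *\<^sub>R e"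
      have "e = norm e *\<^sub>R w"
        using False by (simp add: w_def)
      then have "e \<bullet> G e = (e \<bullet> e) * (w \<bullet> G w)"
        by (metis G.scaleR inner_scaleR_left inner_scaleR_right mult.assoc power2_eq_square power2_norm_eq_inner)
      moreover have "u \<bullet> G u \<le> w \<bullet> G w"
        using False by (intro u_min) (simp add: w_def)
      ultimately show ?thesis
        by (simp add: mult.commute mult_left_mono)
    qed simp
  qed
qed

definition normalized_gram :: "(nat \<Rightarrow> 'a::real_inner) \<Rightarrow> nat \<Rightarrow> real \<Rightarrow> 'a \<Rightarrow> 'a" where
  "normalized_gram \<phi> N \<mu> e = (\<Sum>k=1..N. ((\<phi> k \<bullet> e) / (1 + \<mu> * (\<phi> k \<bullet> \<phi> k))) *\<^sub>R \<phi> k)"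

lemma Bfun_eq_normalized_gram: "Bfun \<phi> N \<theta>s \<theta> \<mu> = normalized_gram \<phi> N \<mu> (\<theta> - \<theta>s)"
  by (simp add: Bfun_def normalized_gram_def inner_diff_right)

lemma bounded_linear_normalized_gram: "bounded_linear (normalized_gram \<phi> N \<mu>)"
  unfolding normalized_gram_def
  by (intro bounded_linear_sum bounded_linear_scaleR_const
      bounded_linear_compose[OF bounded_linear_divide bounded_linear_inner_right])

lemma inner_normalized_gram:
  "u \<bullet> normalized_gram \<phi> N \<mu> v = (\<Sum>k=1..N. (\<phi> k \<bullet> u) * (\<phi> k \<bullet> v) / (1 + \<mu> * (\<phi> k \<bullet> \<phi> k)))"
  by (simp add: normalized_gram_def inner_sum_right inner_commute[of u] mult.commute)

lemma normalized_gram_symmetric: "u \<bullet> normalized_gram \<phi> N \<mu> v = normalized_gram \<phi> N \<mu> u \<bullet> v"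
  unfolding inner_commute[of "normalized_gram \<phi> N \<mu> u"] inner_normalized_gram
  by (simp add: ac_simps)

lemma normalized_gram_le:
  assumes "0 \<le> \<mu>"
  shows "e \<bullet> normalized_gram \<phi> N \<mu> e \<le> (\<Sum>k=1..N. \<phi> k \<bullet> \<phi> k) * (e \<bullet> e)"
  unfolding inner_normalized_gram sum_distrib_right
proof (rule sum_mono)
  fix k
  have "1 \<le> 1 + \<mu> * (\<phi> k \<bullet> \<phi> k)"
    using assms by simp
  then have "(\<phi> k \<bullet> e) * (\<phi> k \<bullet> e) / (1 + \<mu> * (\<phi> k \<bullet> \<phi> k)) \<le> (\<phi> k \<bullet> e) * (\<phi> k \<bullet> e) / 1"
    by (intro divide_left_mono) auto
  also have "\<dots> = (\<phi> k \<bullet> e)\<^sup>2"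
    by (simp add: power2_eq_square)
  also have "\<dots> \<le> \<phi> k \<bullet> \<phi> k * (e \<bullet> e)"
    by (rule Cauchy_Schwarz_ineq)
  finally show "(\<phi> k \<bullet> e) * (\<phi> k \<bullet> e) / (1 + \<mu> * (\<phi> k \<bullet> \<phi> k)) \<le> \<phi> k \<bullet> \<phi> k * (e \<bullet> e)" .
qed

lemma normalized_gram_pos:
  assumes span: "span (\<phi> ` {1..N}) = UNIV" and \<mu>: "0 \<le> \<mu>" and e: "e \<noteq> 0"
  shows "0 < e \<bullet> normalized_gram \<phi> N \<mu> e"
proof -
  have "\<exists>k\<in>{1..N}. \<phi> k \<bullet> e \<noteq> 0"
  proof (rule ccontr)
    assume "\<not> ?thesis"
    then have "\<forall>v \<in> \<phi> ` {1..N}. orthogonal e v"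
      by (auto simp: orthogonal_def inner_commute)
    then have "orthogonal e e"
      using span by (intro orthogonal_to_span[of e "\<phi> ` {1..N}"]) blast+
    with e show False
      by (simp add: orthogonal_def)
  qed
  then obtain k where k: "k \<in> {1..N}" "\<phi> k \<bullet> e \<noteq> 0" ..
  have denom_pos: "0 < 1 + \<mu> * (\<phi> j \<bullet> \<phi> j)" for j
    using \<mu> by (simp add: add_pos_nonneg)
  show ?thesis
    unfolding inner_normalized_gram
  proof (rule sum_pos2[OF finite_atLeastAtMost k(1)])
    show "0 < (\<phi> k \<bullet> e) * (\<phi> k \<bullet> e) / (1 + \<mu> * (\<phi> k \<bullet> \<phi> k))"
      using k(2) denom_pos by (intro divide_pos_pos) (auto simp: zero_less_mult_iff)
    show "0 \<le> (\<phi> j \<bullet> e) * (\<phi> j \<bullet> e) / (1 + \<mu> * (\<phi> j \<bullet> \<phi> j))" for j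
      using denom_pos by (intro divide_nonneg_pos) simp_all
  qed
qed

theorem theorem5:
  fixes \<theta>s :: "real^'n" and \<phi> :: "nat \<Rightarrow> real^'n" and N :: nat
    and \<beta> \<gamma> \<mu> :: real
  assumes "dim (\<phi> ` {1..N}) = CARD('n)"
    and "\<beta> > 0" and "\<gamma> > 0" and "\<mu> \<ge> 0"
  shows "UGAS (\<lambda>t (\<theta>, \<theta>v). (- \<beta> *\<^sub>R (\<theta> - \<theta>v), - \<gamma> *\<^sub>R Bfun \<phi> N \<theta>s \<theta> \<mu>)) (\<theta>s, \<theta>s)"
proof -
  have span: "span (\<phi> ` {1..N}) = UNIV"
    using assms(1) dim_eq_full by fastforce
  obtain m where "0 < m" "\<And>e. m * (e \<bullet> e) \<le> e \<bullet> normalized_gram \<phi> N \<mu> e"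
    using positive_definite_imp_coercive[OF bounded_linear_normalized_gram]
      normalized_gram_pos[OF span \<open>\<mu> \<ge> 0\<close>] by metis
  then have "UGAS (\<lambda>t (\<theta>, \<theta>v). (- \<beta> *\<^sub>R (\<theta> - \<theta>v), - \<gamma> *\<^sub>R normalized_gram \<phi> N \<mu> (\<theta> - \<theta>s)))
      (\<theta>s, \<theta>s)"
    using assms(2-4)
    by (intro UGAS_error_dynamics[where L = "\<Sum>k=1..N. \<phi> k \<bullet> \<phi> k"] bounded_linear_normalized_gram
        normalized_gram_symmetric normalized_gram_le sum_nonneg) auto
  then show ?thesis
    by (simp add: Bfun_eq_normalized_gram)
qed

end
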